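(* Let $\ell=2m+1\ge3$, $a\in\mathfrak o_\ell^\times$ with image $\bar a\in\mathfrak o_m$, let $x\in\mathfrak g(\mathfrak o_m)$ be an $\bar a$-regular element and $\tilde x\in\mathfrak g(\mathfrak o_\ell)$ any lift of $x$. Then $\mathbf U(\mathfrak o_\ell)\cap C_{\mathbf G(\mathfrak o_\ell)}(\tilde x)K_\ell^m=\mathbf U(\varpi^m\mathfrak o_\ell)$.
   Context: $\mathfrak o$: ring of integers of a non-archimedean local field, uniformizer $\varpi$, residue field $\mathbb F_q$ of characteristic $p$; $\mathfrak o_r=\mathfrak o/\varpi^r\mathfrak o$. Either $\mathbf G={\rm GL}_n$, $\mathfrak g=M_n$, or $\mathbf G={\rm SL}_n$, $\mathfrak g=\mathfrak{sl}_n$ with $p$ odd, $p\nmid n$. $\mathbf U(\mathfrak o_\ell)$: upper unitriangular matrices in $\mathbf G(\mathfrak o_\ell)$; $\mathbf U(\varpi^k\mathfrak o_\ell)$: those with strictly upper triangular entries in $\varpi^k\mathfrak o_\ell$. $K_\ell^m=\ker(\mathbf G(\mathfrak o_\ell)\to\mathbf G(\mathfrak o_m))$. For $\alpha\in\mathfrak o_m^\times$, an $\alpha$-regular element of $\mathfrak g(\mathfrak o_m)$ is a matrix with $(2,1)$ entry $\alpha$, $(i+1,i)$ entries $1$ for $2\le i\le n-1$, arbitrary last column, other entries $0$. $C_{\mathbf G(\mathfrak o_\ell)}(\tilde x)$ is the centralizer of $\tilde x$ in $\mathbf G(\mathfrak o_\ell)$. *)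

theory Defs
  imports "Jordan_Normal_Form.Determinant"
begin

text \<open>Congruence modulo pi^k in the ring of integers o (elements of o_k are represented
  by elements of o; equality in o_k is congruence modulo pi^k).\<close>
definition cong_pi :: "'a::idom \<Rightarrow> nat \<Rightarrow> 'a \<Rightarrow> 'a \<Rightarrow> bool" where
  "cong_pi \<pi> k a b \<longleftrightarrow> \<pi> ^ k dvd (a - b)"

text \<open>o is the ring of integers of a non-archimedean local field with uniformizer pi and
  residue field of characteristic p: a complete discrete valuation ring with finite
  residue field of characteristic p.\<close>
definition local_field_integers :: "'a::idom \<Rightarrow> nat \<Rightarrow> bool" where
  "local_field_integers \<pi> p \<longleftrightarrow>
     \<pi> \<noteq> 0 \<and> \<not> \<pi> dvd 1 \<and>
     (\<forall>x. x \<noteq> 0 \<longrightarrow> (\<exists>u k. u dvd 1 \<and> x = u * \<pi> ^ k)) \<and>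
     (\<forall>f :: nat \<Rightarrow> 'a. (\<forall>k. cong_pi \<pi> k (f (Suc k)) (f k)) \<longrightarrow>
        (\<exists>L. \<forall>k. cong_pi \<pi> k L (f k))) \<and>
     (\<exists>S. finite S \<and> (\<forall>x. \<exists>s\<in>S. cong_pi \<pi> 1 x s)) \<and>
     prime p \<and> \<pi> dvd of_nat p"

definition mat_cong :: "'a::idom \<Rightarrow> nat \<Rightarrow> 'a mat \<Rightarrow> 'a mat \<Rightarrow> bool" where
  "mat_cong \<pi> k A B \<longleftrightarrow> dim_row A = dim_row B \<and> dim_col A = dim_col B \<and>
     (\<forall>i < dim_row A. \<forall>j < dim_col A. cong_pi \<pi> k (A $$ (i,j)) (B $$ (i,j)))"

definition mat_trace :: "'a::comm_ring_1 mat \<Rightarrow> 'a" where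
  "mat_trace A = (\<Sum>i<dim_row A. A $$ (i,i))"

text \<open>Representatives of G(o_l): G = GL_n if isSL = False, G = SL_n if isSL = True.\<close>
definition G_mem :: "bool \<Rightarrow> 'a::idom \<Rightarrow> nat \<Rightarrow> nat \<Rightarrow> 'a mat \<Rightarrow> bool" where
  "G_mem isSL \<pi> n l g \<longleftrightarrow> g \<in> carrier_mat n n \<and>
     (if isSL then cong_pi \<pi> l (det g) 1 else (\<exists>v. cong_pi \<pi> l (det g * v) 1))"

definition lie_mem :: "bool \<Rightarrow> 'a::idom \<Rightarrow> nat \<Rightarrow> nat \<Rightarrow> 'a mat \<Rightarrow> bool" where
  "lie_mem isSL \<pi> n l X \<longleftrightarrow> X \<in> carrier_mat n n \<and>
     (isSL \<longrightarrow> cong_pi \<pi> l (mat_trace X) 0)"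

text \<open>x in g(o_m) is alpha-regular (0-based indices: entry (1,0) is alpha, entries
  (j+1,j) for 1 <= j <= n-2 are 1, last column arbitrary, all others 0), modulo pi^m.\<close>
definition regular :: "'a::idom \<Rightarrow> nat \<Rightarrow> nat \<Rightarrow> 'a \<Rightarrow> 'a mat \<Rightarrow> bool" where
  "regular \<pi> n m \<alpha> x \<longleftrightarrow> x \<in> carrier_mat n n \<and>
     (\<forall>i<n. \<forall>j<n. j \<noteq> n - 1 \<longrightarrow>
        cong_pi \<pi> m (x $$ (i,j)) (if i = j + 1 then (if j = 0 then \<alpha> else 1) else 0))"

definition U_set :: "bool \<Rightarrow> 'a::idom \<Rightarrow> nat \<Rightarrow> nat \<Rightarrow> 'a mat set" where
  "U_set isSL \<pi> n l = {u. G_mem isSL \<pi> n l u \<and>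
     (\<forall>i<n. \<forall>j<n. (j < i \<longrightarrow> cong_pi \<pi> l (u $$ (i,j)) 0) \<and>
                   (i = j \<longrightarrow> cong_pi \<pi> l (u $$ (i,j)) 1))}"

definition U_pi_set :: "bool \<Rightarrow> 'a::idom \<Rightarrow> nat \<Rightarrow> nat \<Rightarrow> nat \<Rightarrow> 'a mat set" where
  "U_pi_set isSL \<pi> n k l = {u. u \<in> U_set isSL \<pi> n l \<and>
     (\<forall>i<n. \<forall>j<n. i < j \<longrightarrow> cong_pi \<pi> k (u $$ (i,j)) 0)}"

definition centralizer_set :: "bool \<Rightarrow> 'a::idom \<Rightarrow> nat \<Rightarrow> nat \<Rightarrow> 'a mat \<Rightarrow> 'a mat set" where
  "centralizer_set isSL \<pi> n l xt = {c. G_mem isSL \<pi> n l c \<and> mat_cong \<pi> l (c * xt) (xt * c)}"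

definition K_set :: "bool \<Rightarrow> 'a::idom \<Rightarrow> nat \<Rightarrow> nat \<Rightarrow> nat \<Rightarrow> 'a mat set" where
  "K_set isSL \<pi> n l m = {k. G_mem isSL \<pi> n l k \<and> mat_cong \<pi> m k (1\<^sub>m n)}"

text \<open>Product set C K in G(o_l) (as representatives, saturated under congruence mod pi^l).\<close>
definition prod_set :: "'a::idom \<Rightarrow> nat \<Rightarrow> nat \<Rightarrow> 'a mat set \<Rightarrow> 'a mat set \<Rightarrow> 'a mat set" where
  "prod_set \<pi> n l A B = {g. g \<in> carrier_mat n n \<and> (\<exists>a\<in>A. \<exists>b\<in>B. mat_cong \<pi> l g (a * b))}"

end

theory Submission
  imports Defs
begin

text \<open>Modulo pi^m, the first column of a unipotent upper triangular u is e_0. If u also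
  commutes with an alpha-regular x, comparing column j of u x and x u gives
  c_j u e_(j+1) = x e_j = c_j e_(j+1) with a unit c_j (alpha for j = 0, else 1), so by induction
  every column of u is a standard basis vector and u = 1 mod pi^m. Any u = c k with c
  centralising the lift of x and k in K_l^m commutes with x modulo pi^m, which gives one
  inclusion; the other holds because U(pi^m o_l) lies in K_l^m.\<close>

lemma cong_pi_refl [simp]: "cong_pi \<pi> k a a"
  by (simp add: cong_pi_def)

lemma cong_pi_sym: "cong_pi \<pi> k a b \<Longrightarrow> cong_pi \<pi> k b a"
  unfolding cong_pi_def by (metis dvd_minus_iff minus_diff_eq)

lemma cong_pi_trans [trans]: "cong_pi \<pi> k a b \<Longrightarrow> cong_pi \<pi> k b c \<Longrightarrow> cong_pi \<pi> k a c"
  unfolding cong_pi_def by (metis diff_add_cancel dvd_add add_diff_eq)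

lemma cong_pi_mono: "k \<le> l \<Longrightarrow> cong_pi \<pi> l a b \<Longrightarrow> cong_pi \<pi> k a b"
  unfolding cong_pi_def using power_le_dvd by blast

lemma cong_pi_mult:
  assumes "cong_pi \<pi> k a a'" "cong_pi \<pi> k b b'"
  shows "cong_pi \<pi> k (a * b) (a' * b')"
proof -
  have "a * b - a' * b' = a * (b - b') + (a - a') * b'"
    by (simp add: algebra_simps)
  with assms show ?thesis
    unfolding cong_pi_def by simp
qed

lemma cong_pi_sum:
  "(\<And>i. i \<in> S \<Longrightarrow> cong_pi \<pi> k (f i) (g i)) \<Longrightarrow> cong_pi \<pi> k (sum f S) (sum g S)"
  unfolding cong_pi_def by (simp add: sum_subtractf[symmetric] dvd_sum)

lemma cong_pi_sum_delta:
  fixes n :: nat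
  assumes "k < n" and "\<And>r. r < n \<Longrightarrow> cong_pi \<pi> e (g r) (if r = k then c else 0)"
  shows "cong_pi \<pi> e (\<Sum>r<n. f r * g r) (f k * c)"
proof -
  have "cong_pi \<pi> e (\<Sum>r<n. f r * g r) (\<Sum>r<n. f r * (if r = k then c else 0))"
    using assms(2) by (intro cong_pi_sum cong_pi_mult) auto
  also have "(\<Sum>r<n. f r * (if r = k then c else 0)) = f k * c"
    using assms(1) by (simp add: if_distrib cong: if_cong)
  finally show ?thesis .
qed

lemma uniformizer_prime_elem:
  assumes "local_field_integers \<pi> p"
  shows "prime_elem \<pi>"
proof (rule prime_elemI)
  from assms show "\<pi> \<noteq> 0" and not_unit: "\<not> \<pi> dvd 1"
    unfolding local_field_integers_def by auto
  from assms have factor: "\<And>x. x \<noteq> 0 \<Longrightarrow> \<exists>u k. u dvd 1 \<and> x = u * \<pi> ^ k"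
    unfolding local_field_integers_def by auto
  fix x y assume dvd: "\<pi> dvd x * y"
  show "\<pi> dvd x \<or> \<pi> dvd y"
  proof (cases "x = 0 \<or> y = 0")
    case False
    then obtain u i w j where u: "u dvd 1" "x = u * \<pi> ^ i" and w: "w dvd 1" "y = w * \<pi> ^ j"
      using factor by metis
    show ?thesis
    proof (cases "i = 0 \<and> j = 0")
      case True
      with u w dvd have "\<pi> dvd u * w" by simp
      with u w not_unit show ?thesis by (meson dvd_trans unit_prod)
    next
      case False
      with u w show ?thesis by (metis dvd_mult dvd_power gr0I)
    qed
  qed auto
qed

lemma prime_elem_power_dvd_mult_cancel:
  fixes \<pi> :: "'a::idom"
  assumes \<pi>: "prime_elem \<pi>" and b: "\<not> \<pi> dvd b"
  shows "\<pi> ^ m dvd b * d \<Longrightarrow> \<pi> ^ m dvd d"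
proof (induction m arbitrary: d)
  case (Suc m)
  have "\<pi> dvd b * d"
    using Suc.prems by (metis dvd_mult_left power_Suc)
  with \<pi> b have "\<pi> dvd d"
    using prime_elem_dvd_multD by blast
  then obtain e where e: "d = \<pi> * e" ..
  have "\<pi> * \<pi> ^ m dvd \<pi> * (b * e)"
    using Suc.prems e by (simp add: ac_simps)
  then have "\<pi> ^ m dvd b * e"
    using prime_elem_not_zeroI[OF \<pi>] by simp
  then have "\<pi> ^ m dvd e"
    by (rule Suc.IH)
  with e show ?case
    by (simp add: mult_dvd_mono)
qed simp

lemma cong_pi_mult_cancel_left:
  assumes "prime_elem \<pi>" "\<not> \<pi> dvd c" "cong_pi \<pi> m (c * x) (c * y)"
  shows "cong_pi \<pi> m x y"
proof -
  have "\<pi> ^ m dvd c * (x - y)"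
    using assms(3) by (simp add: cong_pi_def right_diff_distrib)
  with assms(1,2) show ?thesis
    unfolding cong_pi_def by (rule prime_elem_power_dvd_mult_cancel)
qed

lemma mat_cong_refl [simp]: "mat_cong \<pi> k A A"
  unfolding mat_cong_def by auto

lemma mat_cong_sym: "mat_cong \<pi> k A B \<Longrightarrow> mat_cong \<pi> k B A"
  unfolding mat_cong_def using cong_pi_sym by metis

lemma mat_cong_trans [trans]: "mat_cong \<pi> k A B \<Longrightarrow> mat_cong \<pi> k B C \<Longrightarrow> mat_cong \<pi> k A C"
  unfolding mat_cong_def using cong_pi_trans by fastforce

lemma mat_cong_mono: "k \<le> l \<Longrightarrow> mat_cong \<pi> l A B \<Longrightarrow> mat_cong \<pi> k A B"
  unfolding mat_cong_def using cong_pi_mono by blast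

lemma index_mult_mat_square:
  assumes "A \<in> carrier_mat n n" "B \<in> carrier_mat n n" "i < n" "j < n"
  shows "(A * B) $$ (i, j) = (\<Sum>r<n. A $$ (i, r) * B $$ (r, j))"
  using assms by (simp add: scalar_prod_def lessThan_atLeast0)

lemma mat_cong_mult:
  assumes "A \<in> carrier_mat n n" "A' \<in> carrier_mat n n" "B \<in> carrier_mat n n" "B' \<in> carrier_mat n n"
    and "mat_cong \<pi> k A A'" "mat_cong \<pi> k B B'"
  shows "mat_cong \<pi> k (A * B) (A' * B')"
  unfolding mat_cong_def
proof (intro conjI allI impI)
  fix i j assume "i < dim_row (A * B)" "j < dim_col (A * B)"
  with assms(1,3) have ij: "i < n" "j < n" by auto
  show "cong_pi \<pi> k ((A * B) $$ (i, j)) ((A' * B') $$ (i, j))"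
    unfolding index_mult_mat_square[OF assms(1,3) ij] index_mult_mat_square[OF assms(2,4) ij]
    using assms ij unfolding mat_cong_def by (intro cong_pi_sum cong_pi_mult) auto
qed (use assms in auto)

lemma regular_index:
  assumes "regular \<pi> n m \<alpha> x" "i < n" "Suc j < n"
  shows "cong_pi \<pi> m (x $$ (i, j)) (if i = Suc j then if j = 0 then \<alpha> else 1 else 0)"
proof -
  have "j < n" "j \<noteq> n - 1"
    using assms(3) by simp_all
  with assms(1,2) show ?thesis
    unfolding regular_def by simp
qed

lemma mult_regular_index:
  assumes x: "regular \<pi> n m \<alpha> x" and u: "u \<in> carrier_mat n n" and i: "i < n" and j: "Suc j < n"
  shows "cong_pi \<pi> m ((u * x) $$ (i, j)) (u $$ (i, Suc j) * (if j = 0 then \<alpha> else 1))"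
proof -
  have "x \<in> carrier_mat n n"
    using x by (simp add: regular_def)
  then have entry: "(u * x) $$ (i, j) = (\<Sum>r<n. u $$ (i, r) * x $$ (r, j))"
    using u i j by (intro index_mult_mat_square) auto
  have column: "cong_pi \<pi> m (x $$ (r, j)) (if r = Suc j then if j = 0 then \<alpha> else 1 else 0)"
    if "r < n" for r
    using regular_index[OF x that j] .
  show ?thesis
    unfolding entry by (rule cong_pi_sum_delta[OF j column])
qed

lemma mult_unit_column_index:
  assumes "A \<in> carrier_mat n n" "u \<in> carrier_mat n n" "i < n" "j < n"
    and "\<forall>r<n. cong_pi \<pi> m (u $$ (r, j)) (if r = j then 1 else 0)"
  shows "cong_pi \<pi> m ((A * u) $$ (i, j)) (A $$ (i, j))"
  using cong_pi_sum_delta[of j n \<pi> m "\<lambda>r. u $$ (r, j)" 1 "\<lambda>r. A $$ (i, r)"] assms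
  unfolding index_mult_mat_square[OF assms(1-4)] by simp

lemma commutes_with_regular_cong_one:
  assumes \<pi>: "prime_elem \<pi>" and \<alpha>: "\<not> \<pi> dvd \<alpha>"
    and x: "regular \<pi> n m \<alpha> x" and u: "u \<in> carrier_mat n n"
    and comm: "mat_cong \<pi> m (u * x) (x * u)"
    and col0: "\<And>i. i < n \<Longrightarrow> cong_pi \<pi> m (u $$ (i, 0)) (if i = 0 then 1 else 0)"
  shows "mat_cong \<pi> m u (1\<^sub>m n)"
proof -
  have xc: "x \<in> carrier_mat n n"
    using x by (simp add: regular_def)
  have "\<forall>i<n. cong_pi \<pi> m (u $$ (i, j)) (if i = j then 1 else 0)" if "j < n" for j
    using that
  proof (induction j)
    case (Suc j)
    define c where "c = (if j = 0 then \<alpha> else 1)"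
    have c: "\<not> \<pi> dvd c"
      using \<alpha> \<pi> by (simp add: c_def prime_elem_not_unit)
    show ?case
    proof (intro allI impI)
      fix i assume i: "i < n"
      have "cong_pi \<pi> m (u $$ (i, Suc j) * c) ((u * x) $$ (i, j))"
        unfolding c_def by (rule cong_pi_sym[OF mult_regular_index[OF x u i Suc.prems]])
      also have "cong_pi \<pi> m \<dots> ((x * u) $$ (i, j))"
        using comm i Suc.prems xc u by (simp add: mat_cong_def)
      also have "cong_pi \<pi> m \<dots> (x $$ (i, j))"
        using Suc.IH Suc.prems i by (intro mult_unit_column_index[OF xc u]) auto
      also have "cong_pi \<pi> m \<dots> (if i = Suc j then c else 0)"
        unfolding c_def by (rule regular_index[OF x i Suc.prems])
      also have "(if i = Suc j then c else 0) = c * (if i = Suc j then 1 else 0)"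
        by simp
      finally have "cong_pi \<pi> m (c * u $$ (i, Suc j)) (c * (if i = Suc j then 1 else 0))"
        by (simp only: mult.commute)
      then show "cong_pi \<pi> m (u $$ (i, Suc j)) (if i = Suc j then 1 else 0)"
        by (rule cong_pi_mult_cancel_left[OF \<pi> c])
    qed
  qed (use col0 in blast)
  with u show ?thesis
    by (auto simp: mat_cong_def)
qed

lemma prod_centralizer_K_set_commutes:
  assumes "m \<le> l" and x: "x \<in> carrier_mat n n" and xt: "xt \<in> carrier_mat n n"
    and lift: "mat_cong \<pi> m xt x"
    and "u \<in> prod_set \<pi> n l (centralizer_set isSL \<pi> n l xt) (K_set isSL \<pi> n l m)"
  shows "mat_cong \<pi> m (u * x) (x * u)"
proof -
  from assms(5) obtain c k where u: "u \<in> carrier_mat n n"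
    and c: "c \<in> carrier_mat n n" "mat_cong \<pi> l (c * xt) (xt * c)"
    and k: "k \<in> carrier_mat n n" "mat_cong \<pi> m k (1\<^sub>m n)"
    and uck: "mat_cong \<pi> l u (c * k)"
    by (auto simp: prod_set_def centralizer_set_def K_set_def G_mem_def)
  have "mat_cong \<pi> m (c * k) (c * 1\<^sub>m n)"
    using c k by (intro mat_cong_mult) auto
  then have uc: "mat_cong \<pi> m u c"
    using c mat_cong_mono[OF \<open>m \<le> l\<close> uck] mat_cong_trans by auto
  have "mat_cong \<pi> m (u * x) (c * xt)"
    using u c x xt uc lift by (intro mat_cong_mult) (auto intro: mat_cong_sym)
  also have "mat_cong \<pi> m \<dots> (xt * c)"
    using mat_cong_mono[OF \<open>m \<le> l\<close> c(2)] .
  also have "mat_cong \<pi> m \<dots> (x * u)"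
    using u c x xt uc lift by (intro mat_cong_mult) (auto intro: mat_cong_sym)
  finally show ?thesis
    using mat_cong_trans by blast
qed

lemma U_set_carrier: "u \<in> U_set isSL \<pi> n l \<Longrightarrow> u \<in> carrier_mat n n"
  by (simp add: U_set_def G_mem_def)

lemma U_set_lower_index:
  assumes "u \<in> U_set isSL \<pi> n l" "i < n" "j < n" "j \<le> i"
  shows "cong_pi \<pi> l (u $$ (i, j)) (if i = j then 1 else 0)"
  using assms unfolding U_set_def by (cases "i = j") simp_all

lemma U_set_first_column:
  assumes "m \<le> l" "u \<in> U_set isSL \<pi> n l" "i < n"
  shows "cong_pi \<pi> m (u $$ (i, 0)) (if i = 0 then 1 else 0)"
  using cong_pi_mono[OF assms(1) U_set_lower_index[OF assms(2,3)]] assms(3) by simp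

lemma U_pi_set_iff_cong_one:
  assumes "m \<le> l"
  shows "u \<in> U_pi_set isSL \<pi> n m l \<longleftrightarrow> u \<in> U_set isSL \<pi> n l \<and> mat_cong \<pi> m u (1\<^sub>m n)"
proof (intro iffI conjI)
  assume "u \<in> U_set isSL \<pi> n l \<and> mat_cong \<pi> m u (1\<^sub>m n)"
  then have U: "u \<in> U_set isSL \<pi> n l" and cong_one: "mat_cong \<pi> m u (1\<^sub>m n)"
    by simp_all
  have "cong_pi \<pi> m (u $$ (i, j)) 0" if ij: "i < n" "j < n" "i < j" for i j
  proof -
    have "cong_pi \<pi> m (u $$ (i, j)) (1\<^sub>m n $$ (i, j))"
      using cong_one U_set_carrier[OF U] ij(1,2) by (simp add: mat_cong_def)
    with ij show ?thesis
      by simp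
  qed
  with U show "u \<in> U_pi_set isSL \<pi> n m l"
    by (simp add: U_pi_set_def)
next
  assume u: "u \<in> U_pi_set isSL \<pi> n m l"
  then show U: "u \<in> U_set isSL \<pi> n l"
    by (simp add: U_pi_set_def)
  have "cong_pi \<pi> m (u $$ (i, j)) (1\<^sub>m n $$ (i, j))" if ij: "i < n" "j < n" for i j
  proof (cases "i < j")
    case True
    with u ij show ?thesis
      by (simp add: U_pi_set_def)
  next
    case False
    with ij show ?thesis
      using cong_pi_mono[OF assms U_set_lower_index[OF U ij]] by simp
  qed
  with U_set_carrier[OF U] show "mat_cong \<pi> m u (1\<^sub>m n)"
    by (simp add: mat_cong_def)
qed

lemma U_pi_set_subset_K_set:
  assumes "m \<le> l"
  shows "U_pi_set isSL \<pi> n m l \<subseteq> U_set isSL \<pi> n l \<inter> K_set isSL \<pi> n l m"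
proof
  fix u assume "u \<in> U_pi_set isSL \<pi> n m l"
  then show "u \<in> U_set isSL \<pi> n l \<inter> K_set isSL \<pi> n l m"
    by (simp add: U_pi_set_iff_cong_one[OF assms] U_set_def K_set_def)
qed

lemma one_mem_centralizer_set:
  assumes "xt \<in> carrier_mat n n"
  shows "1\<^sub>m n \<in> centralizer_set isSL \<pi> n l xt"
proof -
  have "G_mem isSL \<pi> n l (1\<^sub>m n)"
    unfolding G_mem_def by (auto intro: exI[of _ 1])
  with assms show ?thesis
    by (simp add: centralizer_set_def)
qed

lemma K_set_subset_prod_centralizer:
  assumes "xt \<in> carrier_mat n n"
  shows "K_set isSL \<pi> n l m \<subseteq> prod_set \<pi> n l (centralizer_set isSL \<pi> n l xt) (K_set isSL \<pi> n l m)"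
proof
  fix k assume k: "k \<in> K_set isSL \<pi> n l m"
  then have kc: "k \<in> carrier_mat n n"
    by (simp add: K_set_def G_mem_def)
  then have "mat_cong \<pi> l k (1\<^sub>m n * k)"
    by simp
  with k kc one_mem_centralizer_set[OF assms]
  show "k \<in> prod_set \<pi> n l (centralizer_set isSL \<pi> n l xt) (K_set isSL \<pi> n l m)"
    unfolding prod_set_def by blast
qed

theorem lemma4p5:
  fixes \<pi> :: "'a::idom" and p n m l :: nat and isSL :: bool
    and a :: 'a and x xt :: "'a mat"
  assumes o_local: "local_field_integers \<pi> p"
    and n_pos: "n \<ge> 1"
    and SL_cond: "isSL \<longrightarrow> odd p \<and> \<not> p dvd n"
    and l_def: "l = 2 * m + 1" and l_ge: "l \<ge> 3"
    and a_unit: "\<not> \<pi> dvd a"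
    and x_lie: "lie_mem isSL \<pi> n m x"
    and x_reg: "regular \<pi> n m a x"
    and xt_lie: "lie_mem isSL \<pi> n l xt"
    and xt_lift: "mat_cong \<pi> m xt x"
  shows "U_set isSL \<pi> n l \<inter> prod_set \<pi> n l (centralizer_set isSL \<pi> n l xt) (K_set isSL \<pi> n l m)
           = U_pi_set isSL \<pi> n m l"
proof -
  have ml: "m \<le> l" using l_def by simp
  have xc: "x \<in> carrier_mat n n" using x_reg by (simp add: regular_def)
  have xtc: "xt \<in> carrier_mat n n" using xt_lie by (simp add: lie_mem_def)
  have "u \<in> U_pi_set isSL \<pi> n m l"
    if uU: "u \<in> U_set isSL \<pi> n l"
      and uCK: "u \<in> prod_set \<pi> n l (centralizer_set isSL \<pi> n l xt) (K_set isSL \<pi> n l m)" for u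
  proof -
    have "mat_cong \<pi> m u (1\<^sub>m n)"
    proof (rule commutes_with_regular_cong_one[OF uniformizer_prime_elem[OF o_local] a_unit x_reg])
      show "u \<in> carrier_mat n n"
        using uCK by (simp add: prod_set_def)
      show "mat_cong \<pi> m (u * x) (x * u)"
        by (rule prod_centralizer_K_set_commutes[OF ml xc xtc xt_lift uCK])
    qed (rule U_set_first_column[OF ml uU])
    with uU show ?thesis
      by (simp add: U_pi_set_iff_cong_one[OF ml])
  qed
  moreover have "U_pi_set isSL \<pi> n m l \<subseteq> U_set isSL \<pi> n l \<inter> K_set isSL \<pi> n l m"
    by (rule U_pi_set_subset_K_set[OF ml])
  ultimately show ?thesis
    using K_set_subset_prod_centralizer[OF xtc] by blast
qed

end
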